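(* Let $(\mathcal A,X,\alpha)$ be a PTS of type $\diamond\in\{0,*,\omega,\infty\}$ and let $\mathbf{tr}(x)$ denote the unique extension to $\sigma(\mathcal S_\diamond)$ of the trace pre-measure. Then for every $S\in\sigma(\mathcal S_\diamond)$ the function $X\to[0,1]$, $x\mapsto\mathbf{tr}(x)(S)$, is Borel measurable. Consequently $\mathbf{tr}:X\to T\mathcal A^\diamond$ (with $T=\mathbb S$ for $\diamond\in\{0,*\}$ and $T=\mathbb P$ for $\diamond\in\{\omega,\infty\}$, and $\mathcal A^0:=\emptyset$) is a measurable map, i.e. a Kleisli arrow of $T$.
   Context: $\mathcal A$ finite alphabet with $\sigma$-algebra $\mathcal P(\mathcal A)$; $\mathbf 1=\{\checkmark\}$. $\mathbb S(Y)$ / $\mathbb P(Y)$: sub-probability / probability measures on $\Sigma_Y$ with the smallest $\sigma$-algebra making evaluation maps $P\mapsto P(S)$ Borel measurable. A PTS of type $\diamond$ is $(\mathcal A,X,\alpha)$ with $\alpha$ a measurable map $X\to\mathbb S(\mathcal A\times X)$ ($0$), $X\to\mathbb S(\mathcal A\times X+\mathbf 1)$ ($*$), $X\to\mathbb P(\mathcal A\times X)$ ($\omega$), $X\to\mathbb P(\mathcal A\times X+\mathbf 1)$ ($\infty$); $\mathbf P_a(x,S)=\alpha(x)(\{a\}\times S)$. $C_\omega(u)=\{v\in\mathcal A^\omega:u\sqsubseteq v\}$, $C_\infty(u)=\{v\in\mathcal A^\infty:u\sqsubseteq v\}$ ($\mathcal A^\infty=\mathcal A^*\cup\mathcal A^\omega$).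 $\mathcal S_0=\{\emptyset\}$, $\mathcal S_*=\{\emptyset\}\cup\{\{u\}:u\in\mathcal A^*\}$, $\mathcal S_\omega=\{\emptyset\}\cup\{C_\omega(u)\}$, $\mathcal S_\infty=\{\emptyset\}\cup\{\{u\}\}\cup\{C_\infty(u)\}$ ($u\in\mathcal A^*$). Trace pre-measure: $\mathbf{tr}(x)(\emptyset)=0$; for $\diamond\in\{*,\infty\}$: $\mathbf{tr}(x)(\{\epsilon\})=\alpha(x)(\mathbf 1)$, $\mathbf{tr}(x)(\{au\})=\int\mathbf{tr}(x')(\{u\})\,d\mathbf P_a(x,x')$; for $\diamond\in\{\omega,\infty\}$: $\mathbf{tr}(x)(C_\diamond(\epsilon))=1$, $\mathbf{tr}(x)(C_\diamond(au))=\int\mathbf{tr}(x')(C_\diamond(u))\,d\mathbf P_a(x,x')$. It is known (from the paper) that each $\mathbf{tr}(x)$ is a $\sigma$-finite pre-measure with a unique extension that is a sub-probability (resp. probability for $\omega,\infty$) measure. *)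

theory Defs
  imports "HOL-Probability.Probability" "HOL-Library.Sublist"
begin

datatype pts_type = T0 | TStar | TOmega | TInf

definition terminating :: "pts_type \<Rightarrow> bool" where
  "terminating d \<longleftrightarrow> d = TStar \<or> d = TInf"

definition infinite_runs :: "pts_type \<Rightarrow> bool" where
  "infinite_runs d \<longleftrightarrow> d = TOmega \<or> d = TInf"

text \<open>Sub-probability measures on Y, with the sigma-algebra generated by the evaluation
  maps (the Giry-style construction of the library, but without the library's requirement
  that the underlying space be nonempty, so that S(empty) = {0} as in the paper).\<close>
definition sub_prob_algebra :: "'b measure \<Rightarrow> 'b measure measure" where
  "sub_prob_algebra K =
    (SUP A \<in> sets K. vimage_algebra {N. sets N = sets K \<and> emeasure N (space N) \<le> 1}
        (\<lambda>N. emeasure N A) borel)"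

definition T_alg :: "pts_type \<Rightarrow> 'b measure \<Rightarrow> 'b measure measure" where
  "T_alg d K = (if infinite_runs d then prob_algebra K else sub_prob_algebra K)"

text \<open>A x X (+ 1): the element of 1 is encoded as None, (a,x) as Some (a,x).
  The alphabet carries the discrete sigma-algebra.\<close>
definition succ_space :: "pts_type \<Rightarrow> 'a set \<Rightarrow> 'x measure \<Rightarrow> ('a \<times> 'x) option measure" where
  "succ_space d A M =
     (let N = count_space A \<Otimes>\<^sub>M M in
      if terminating d
      then sigma (insert None (Some ` space N)) (insert {None} ((`) Some ` sets N))
      else sigma (Some ` space N) ((`) Some ` sets N))"

definition trans_meas :: "'x measure \<Rightarrow> ('x \<Rightarrow> ('a \<times> 'x) option measure) \<Rightarrow> 'a \<Rightarrow> 'x \<Rightarrow> 'x measure" where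
  "trans_meas M \<alpha> a x = measure_of (space M) (sets M) (\<lambda>S. emeasure (\<alpha> x) (Some ` ({a} \<times> S)))"

type_synonym 'a word = "'a list + (nat \<Rightarrow> 'a)"

definition words :: "pts_type \<Rightarrow> 'a set \<Rightarrow> 'a word set" where
  "words d A =
     (if terminating d then Inl ` lists A else {}) \<union>
     (if infinite_runs d then Inr ` {f. \<forall>n. f n \<in> A} else {})"

fun word_prefix :: "'a list \<Rightarrow> 'a word \<Rightarrow> bool" where
  "word_prefix u (Inl w) \<longleftrightarrow> prefix u w"
| "word_prefix u (Inr f) \<longleftrightarrow> u = map f [0..<length u]"

definition cyl :: "pts_type \<Rightarrow> 'a set \<Rightarrow> 'a list \<Rightarrow> 'a word set" where
  "cyl d A u = {v \<in> words d A. word_prefix u v}"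

definition gens :: "pts_type \<Rightarrow> 'a set \<Rightarrow> 'a word set set" where
  "gens d A =
     {{}} \<union>
     (if terminating d then {{Inl u} | u. u \<in> lists A} else {}) \<union>
     (if infinite_runs d then {cyl d A u | u. u \<in> lists A} else {})"

definition trace_space :: "pts_type \<Rightarrow> 'a set \<Rightarrow> 'a word measure" where
  "trace_space d A = sigma (words d A) (gens d A)"

text \<open>Trace pre-measure on singletons {u} (types * and infinity).\<close>
primrec tr_single :: "'x measure \<Rightarrow> ('x \<Rightarrow> ('a \<times> 'x) option measure) \<Rightarrow> 'a list \<Rightarrow> 'x \<Rightarrow> ennreal" where
  "tr_single M \<alpha> [] x = emeasure (\<alpha> x) {None}"
| "tr_single M \<alpha> (a # u) x = (\<integral>\<^sup>+ x'. tr_single M \<alpha> u x' \<partial>(trans_meas M \<alpha> a x))"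

text \<open>Trace pre-measure on cylinders C(u) (types omega and infinity).\<close>
primrec tr_cyl :: "'x measure \<Rightarrow> ('x \<Rightarrow> ('a \<times> 'x) option measure) \<Rightarrow> 'a list \<Rightarrow> 'x \<Rightarrow> ennreal" where
  "tr_cyl M \<alpha> [] x = 1"
| "tr_cyl M \<alpha> (a # u) x = (\<integral>\<^sup>+ x'. tr_cyl M \<alpha> u x' \<partial>(trans_meas M \<alpha> a x))"

definition is_trace_extension ::
  "pts_type \<Rightarrow> 'a set \<Rightarrow> 'x measure \<Rightarrow> ('x \<Rightarrow> ('a \<times> 'x) option measure) \<Rightarrow> 'x \<Rightarrow> 'a word measure \<Rightarrow> bool" where
  "is_trace_extension d A M \<alpha> x \<mu> \<longleftrightarrow>
     sets \<mu> = sets (trace_space d A) \<and>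
     emeasure \<mu> {} = 0 \<and>
     (terminating d \<longrightarrow> (\<forall>u \<in> lists A. emeasure \<mu> {Inl u} = tr_single M \<alpha> u x)) \<and>
     (infinite_runs d \<longrightarrow> (\<forall>u \<in> lists A. emeasure \<mu> (cyl d A u) = tr_cyl M \<alpha> u x))"

end

theory Submission imports Defs begin

(* For every state x the trace measure tr x is determined by its values on the generators
   gens d A of the trace sigma-algebra: the singletons {u} of finite words and the
   cylinders C(u).  On these generators the values tr_single u x and tr_cyl u x are
   defined by iterated integrals against the transition kernels P_a(x,-), so they are
   measurable in x by induction on u.  The generators form an Int-stable family, and the
   total mass of tr x is at most 1 and measurable in x: it is 1 for types omega and
   infinity, and for the terminating type it is the supremum of the finite sums of the
   pre-measure over words of bounded length.  A Dynkin argument then extends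
   measurability from the generators to every set of the trace sigma-algebra, and the
   Kleisli-arrow property follows from the characterisation of measurable maps into the
   (sub-)probability algebras. *)

section \<open>The sub-probability algebra and the monad T\<close>

lemma space_sub_prob_algebra:
  "space (sub_prob_algebra K) = {N. sets N = sets K \<and> emeasure N (space N) \<le> 1}"
  by (auto simp add: sub_prob_algebra_def space_Sup_eq_UN)

lemma measurable_emeasure_sub_prob_algebra:
  "B \<in> sets K \<Longrightarrow> (\<lambda>N. emeasure N B) \<in> borel_measurable (sub_prob_algebra K)"
  by (auto intro!: measurable_Sup1 measurable_vimage_algebra1 simp: sub_prob_algebra_def)

lemma measurable_sub_prob_algebra:
  assumes "\<And>a. a \<in> space M \<Longrightarrow> emeasure (K a) (space (K a)) \<le> 1"
    and "\<And>a. a \<in> space M \<Longrightarrow> sets (K a) = sets N"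
    and "\<And>B. B \<in> sets N \<Longrightarrow> (\<lambda>a. emeasure (K a) B) \<in> borel_measurable M"
  shows "K \<in> M \<rightarrow>\<^sub>M sub_prob_algebra N"
  using assms by (auto intro!: measurable_Sup2 measurable_vimage_algebra2 simp: sub_prob_algebra_def)

lemma in_space_T_alg:
  assumes "N \<in> space (T_alg d K)"
  shows "sets N = sets K \<and> emeasure N (space N) \<le> 1"
  using assms by (auto simp: T_alg_def space_prob_algebra space_sub_prob_algebra split: if_splits
     dest: prob_space.emeasure_space_1)

lemma measurable_emeasure_T_alg:
  assumes "f \<in> M \<rightarrow>\<^sub>M T_alg d K" "B \<in> sets K"
  shows "(\<lambda>x. emeasure (f x) B) \<in> borel_measurable M"
proof (cases "infinite_runs d")
  case True
  then have "f \<in> M \<rightarrow>\<^sub>M subprob_algebra K"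
    using assms(1) by (simp add: T_alg_def measurable_prob_algebraD)
  then show ?thesis using assms(2) by (rule measurable_emeasure_kernel)
next
  case False
  then have "f \<in> M \<rightarrow>\<^sub>M sub_prob_algebra K" using assms(1) by (simp add: T_alg_def)
  then show ?thesis using measurable_emeasure_sub_prob_algebra[OF assms(2)] by (rule measurable_compose)
qed

text \<open>Unlike the library's version, the underlying space may be empty.\<close>

lemma measurable_emeasure_generated:
  assumes eq: "sets N = sigma_sets \<Omega> G" and stable: "Int_stable G" and G: "G \<subseteq> Pow \<Omega>"
    and sets: "\<And>a. a \<in> space M \<Longrightarrow> sets (K a) = sets N"
    and mass: "\<And>a. a \<in> space M \<Longrightarrow> emeasure (K a) \<Omega> \<le> 1"
    and gen: "\<And>B. B \<in> G \<Longrightarrow> (\<lambda>a. emeasure (K a) B) \<in> borel_measurable M"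
    and total: "(\<lambda>a. emeasure (K a) \<Omega>) \<in> borel_measurable M"
    and S: "S \<in> sets N"
  shows "(\<lambda>a. emeasure (K a) S) \<in> borel_measurable M"
proof (cases "\<Omega> = {}")
  case True
  then have "S = {}" using sigma_sets_into_sp[OF G] S eq by auto
  then show ?thesis by simp
next
  case False
  have "space N = \<Omega>"
    using sets_eq_imp_space_eq[of N "sigma \<Omega> G"] eq G by (simp add: sets_measure_of space_measure_of)
  then have "subprob_space (K a)" if "a \<in> space M" for a
    using mass[OF that] sets_eq_imp_space_eq[OF sets[OF that]] False by (intro subprob_spaceI) auto
  then have "K \<in> M \<rightarrow>\<^sub>M subprob_algebra N"
    by (rule measurable_subprob_algebra_generated[OF eq stable G _ sets gen total])
  then show ?thesis using S by (rule measurable_emeasure_kernel)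
qed

section \<open>The successor space and the transition kernels\<close>

lemma in_sets_sigma: "G \<subseteq> Pow \<Omega> \<Longrightarrow> B \<in> G \<Longrightarrow> B \<in> sets (sigma \<Omega> G)"
  by (simp add: sets_measure_of sigma_sets.Basic)

lemma sets_succ_space:
  fixes A :: "'a set" and M :: "'x measure"
  defines "N \<equiv> count_space A \<Otimes>\<^sub>M M"
  shows "B \<in> sets N \<Longrightarrow> Some ` B \<in> sets (succ_space d A M)"
    and "terminating d \<Longrightarrow> {None} \<in> sets (succ_space d A M)"
proof -
  have gen: "(`) Some ` sets N \<subseteq> Pow (Some ` space N)"
    using sets.sets_into_space by blast
  then have gen_terminating: "insert {None} ((`) Some ` sets N) \<subseteq> Pow (insert None (Some ` space N))"
    by blast
  show "Some ` B \<in> sets (succ_space d A M)" if "B \<in> sets N"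
    using that in_sets_sigma[OF gen] in_sets_sigma[OF gen_terminating]
    unfolding succ_space_def Let_def N_def[symmetric] by simp
  show "{None} \<in> sets (succ_space d A M)" if "terminating d"
    using that in_sets_sigma[OF gen_terminating]
    unfolding succ_space_def Let_def N_def[symmetric] by simp
qed

lemma sets_succ_space_Some:
  "a \<in> A \<Longrightarrow> S \<in> sets M \<Longrightarrow> Some ` ({a} \<times> S) \<in> sets (succ_space d A M)"
  by (intro sets_succ_space(1) pair_measureI) auto

lemma sets_trans_meas [simp]: "sets (trans_meas M \<alpha> a x) = sets M"
  unfolding trans_meas_def by (simp add: sets.space_closed)

lemma space_trans_meas [simp]: "space (trans_meas M \<alpha> a x) = space M"
  unfolding trans_meas_def by (simp add: sets.space_closed)

lemma borel_measurable_trans_meas: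
  "f \<in> borel_measurable M \<Longrightarrow> f \<in> borel_measurable (trans_meas M \<alpha> a x)"
proof -
  have "borel_measurable (trans_meas M \<alpha> a x) = borel_measurable M"
    by (rule measurable_cong_sets) auto
  then show "f \<in> borel_measurable M \<Longrightarrow> f \<in> borel_measurable (trans_meas M \<alpha> a x)" by blast
qed

text \<open>Finite sets of words of bounded length; they exhaust the finite words and are used to
  express the total terminating mass of a trace measure.\<close>

definition words_upto :: "'a set \<Rightarrow> nat \<Rightarrow> 'a list set" where
  "words_upto A n = {u. set u \<subseteq> A \<and> length u \<le> n}"

lemma finite_words_upto: "finite A \<Longrightarrow> finite (words_upto A n)"
  using finite_lists_length_le[of A n] by (simp add: words_upto_def)

lemma words_upto_lists: "words_upto A n \<subseteq> lists A"
  by (auto simp: words_upto_def)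

lemma lists_UN_words_upto: "lists A = (\<Union>n. words_upto A n)"
  by (auto simp: words_upto_def)

lemma sum_words_upto_Suc:
  assumes "finite A"
  shows "(\<Sum>u\<in>words_upto A (Suc n). f u) = f [] + (\<Sum>a\<in>A. \<Sum>u\<in>words_upto A n. f (a # u))"
proof -
  have eq: "words_upto A (Suc n) = insert [] (\<Union>a\<in>A. (#) a ` words_upto A n)"
  proof (intro equalityI subsetI)
    fix u assume "u \<in> words_upto A (Suc n)"
    then show "u \<in> insert [] (\<Union>a\<in>A. (#) a ` words_upto A n)"
      by (cases u) (auto simp: words_upto_def)
  qed (auto simp: words_upto_def)
  have fin: "finite ((#) a ` words_upto A n)" for a
    using finite_words_upto[OF assms] by simp
  have "(\<Sum>u\<in>words_upto A (Suc n). f u) = f [] + (\<Sum>u\<in>(\<Union>a\<in>A. (#) a ` words_upto A n). f u)"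
    unfolding eq by (subst sum.insert) (auto simp: fin assms)
  also have "(\<Sum>u\<in>(\<Union>a\<in>A. (#) a ` words_upto A n). f u) = (\<Sum>a\<in>A. \<Sum>u\<in>(#) a ` words_upto A n. f u)"
    by (rule sum.UNION_disjoint) (auto simp: assms fin)
  also have "\<dots> = (\<Sum>a\<in>A. \<Sum>u\<in>words_upto A n. f (a # u))"
    by (rule sum.cong[OF refl], subst sum.reindex) (auto simp: inj_on_def)
  finally show ?thesis .
qed

section \<open>The trace pre-measure of a PTS\<close>

locale pts =
  fixes d :: pts_type and A :: "'a set" and M :: "'x measure"
    and \<alpha> :: "'x \<Rightarrow> ('a \<times> 'x) option measure"
  assumes finite_alphabet: "finite A" and alpha: "\<alpha> \<in> M \<rightarrow>\<^sub>M T_alg d (succ_space d A M)"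
begin

lemma alpha_state: "x \<in> space M \<Longrightarrow> sets (\<alpha> x) = sets (succ_space d A M) \<and> emeasure (\<alpha> x) (space (\<alpha> x)) \<le> 1"
  using in_space_T_alg[OF measurable_space[OF alpha]] .

lemma emeasure_trans_meas:
  assumes a: "a \<in> A" and x: "x \<in> space M" and S: "S \<in> sets M"
  shows "emeasure (trans_meas M \<alpha> a x) S = emeasure (\<alpha> x) (Some ` ({a} \<times> S))"
  unfolding trans_meas_def
proof (rule emeasure_measure_of_sigma[OF sets.sigma_algebra_axioms _ _ S])
  show "positive (sets M) (\<lambda>S. emeasure (\<alpha> x) (Some ` ({a} \<times> S)))"
    by (simp add: positive_def)
  show "countably_additive (sets M) (\<lambda>S. emeasure (\<alpha> x) (Some ` ({a} \<times> S)))"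
    unfolding countably_additive_def
  proof (intro allI impI)
    fix F :: "nat \<Rightarrow> _" assume F: "range F \<subseteq> sets M" "disjoint_family F" "\<Union> (range F) \<in> sets M"
    have eq: "Some ` ({a} \<times> \<Union> (range F)) = (\<Union>i. Some ` ({a} \<times> F i))" by auto
    have "range (\<lambda>i. Some ` ({a} \<times> F i)) \<subseteq> sets (\<alpha> x)"
      using F(1) alpha_state[OF x] sets_succ_space_Some[OF a] by auto
    moreover have "disjoint_family (\<lambda>i. Some ` ({a} \<times> F i))"
      using F(2) by (auto simp: disjoint_family_on_def)
    ultimately show "(\<Sum>i. emeasure (\<alpha> x) (Some ` ({a} \<times> F i))) = emeasure (\<alpha> x) (Some ` ({a} \<times> \<Union> (range F)))"
      unfolding eq by (rule suminf_emeasure)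
  qed
qed

lemma trans_meas_kernel:
  assumes a: "a \<in> A"
  shows "trans_meas M \<alpha> a \<in> M \<rightarrow>\<^sub>M subprob_algebra M"
proof (rule measurable_subprob_algebra)
  fix x assume x: "x \<in> space M"
  have "emeasure (trans_meas M \<alpha> a x) (space M) = emeasure (\<alpha> x) (Some ` ({a} \<times> space M))"
    using emeasure_trans_meas[OF a x sets.top] .
  also have "\<dots> \<le> emeasure (\<alpha> x) (space (\<alpha> x))" by (rule emeasure_space)
  also have "\<dots> \<le> 1" using alpha_state[OF x] by simp
  finally show "subprob_space (trans_meas M \<alpha> a x)" using x by (intro subprob_spaceI) auto
next
  fix U assume U: "U \<in> sets M"
  have "(\<lambda>x. emeasure (\<alpha> x) (Some ` ({a} \<times> U))) \<in> borel_measurable M"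
    by (rule measurable_emeasure_T_alg[OF alpha sets_succ_space_Some[OF a U]])
  then show "(\<lambda>x. emeasure (trans_meas M \<alpha> a x) U) \<in> borel_measurable M"
    by (rule measurable_cong[THEN iffD1, rotated]) (simp add: emeasure_trans_meas[OF a _ U])
qed simp

lemma measurable_nn_integral_trans_meas:
  assumes a: "a \<in> A" and f: "f \<in> borel_measurable M"
  shows "(\<lambda>x. \<integral>\<^sup>+ y. f y \<partial>trans_meas M \<alpha> a x) \<in> borel_measurable M"
proof -
  have "(\<lambda>(x, y). f y) \<in> borel_measurable (M \<Otimes>\<^sub>M M)" using f by measurable
  from nn_integral_measurable_subprob_algebra2[OF this trans_meas_kernel[OF a]] show ?thesis
    by simp
qed

lemma measurable_tr_single:
  "terminating d \<Longrightarrow> u \<in> lists A \<Longrightarrow> (\<lambda>x. tr_single M \<alpha> u x) \<in> borel_measurable M"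
proof (induction u)
  case Nil
  then show ?case using measurable_emeasure_T_alg[OF alpha sets_succ_space(2)] by simp
next
  case (Cons a u)
  then show ?case using measurable_nn_integral_trans_meas[of a "\<lambda>x. tr_single M \<alpha> u x"] by simp
qed

lemma measurable_tr_cyl: "u \<in> lists A \<Longrightarrow> (\<lambda>x. tr_cyl M \<alpha> u x) \<in> borel_measurable M"
proof (induction u)
  case Nil
  have "tr_cyl M \<alpha> [] = (\<lambda>_. 1)" by auto
  then show ?case by simp
next
  case (Cons a u)
  then show ?case using measurable_nn_integral_trans_meas[of a "\<lambda>x. tr_cyl M \<alpha> u x"] by simp
qed

lemma termination_plus_successors_le_1:
  assumes trm: "terminating d" and x: "x \<in> space M"
  shows "emeasure (\<alpha> x) {None} + (\<Sum>a\<in>A. emeasure (trans_meas M \<alpha> a x) (space M)) \<le> 1"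
proof -
  define succ :: "'a \<Rightarrow> _" where "succ a = Some ` ({a} \<times> space M)" for a
  have succ: "succ a \<in> sets (\<alpha> x)" if "a \<in> A" for a
    using alpha_state[OF x] sets_succ_space_Some[OF that sets.top] by (simp add: succ_def)
  have None: "{None} \<in> sets (\<alpha> x)"
    using alpha_state[OF x] sets_succ_space(2)[OF trm] by simp
  have "(\<Sum>a\<in>A. emeasure (trans_meas M \<alpha> a x) (space M)) = (\<Sum>a\<in>A. emeasure (\<alpha> x) (succ a))"
    using emeasure_trans_meas[OF _ x sets.top] by (simp add: succ_def)
  also have "\<dots> = emeasure (\<alpha> x) (\<Union>a\<in>A. succ a)"
    using succ finite_alphabet by (intro sum_emeasure) (auto simp: succ_def disjoint_family_on_def)
  finally have "emeasure (\<alpha> x) {None} + (\<Sum>a\<in>A. emeasure (trans_meas M \<alpha> a x) (space M))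
      = emeasure (\<alpha> x) {None} + emeasure (\<alpha> x) (\<Union>a\<in>A. succ a)" by simp
  also have "\<dots> = emeasure (\<alpha> x) ({None} \<union> (\<Union>a\<in>A. succ a))"
    using succ None finite_alphabet by (intro plus_emeasure) (auto simp: succ_def)
  also have "\<dots> \<le> emeasure (\<alpha> x) (space (\<alpha> x))" by (rule emeasure_space)
  also have "\<dots> \<le> 1" using alpha_state[OF x] by simp
  finally show ?thesis .
qed

lemma sum_tr_single_le_1:
  "terminating d \<Longrightarrow> x \<in> space M \<Longrightarrow> (\<Sum>u\<in>words_upto A n. tr_single M \<alpha> u x) \<le> 1"
proof (induction n arbitrary: x)
  case 0
  have "words_upto A 0 = {[]}" by (auto simp: words_upto_def)
  then show ?case
    using order_trans[OF add_increasing2[OF zero_le order_refl] termination_plus_successors_le_1[OF 0]]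
    by simp
next
  case (Suc n)
  note trm = Suc.prems(1) and x = Suc.prems(2)
  have integral_le: "(\<Sum>u\<in>words_upto A n. \<integral>\<^sup>+y. tr_single M \<alpha> u y \<partial>trans_meas M \<alpha> a x)
      \<le> emeasure (trans_meas M \<alpha> a x) (space M)" for a
  proof -
    have "(\<Sum>u\<in>words_upto A n. \<integral>\<^sup>+y. tr_single M \<alpha> u y \<partial>trans_meas M \<alpha> a x)
        = (\<integral>\<^sup>+y. (\<Sum>u\<in>words_upto A n. tr_single M \<alpha> u y) \<partial>trans_meas M \<alpha> a x)"
      using measurable_tr_single[OF trm] words_upto_lists
      by (intro nn_integral_sum[symmetric] borel_measurable_trans_meas) blast
    also have "\<dots> \<le> (\<integral>\<^sup>+y. 1 \<partial>trans_meas M \<alpha> a x)"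
      by (rule nn_integral_mono) (use Suc.IH[OF trm] in simp)
    finally show ?thesis by simp
  qed
  have "(\<Sum>u\<in>words_upto A (Suc n). tr_single M \<alpha> u x)
      = emeasure (\<alpha> x) {None} + (\<Sum>a\<in>A. \<Sum>u\<in>words_upto A n. \<integral>\<^sup>+y. tr_single M \<alpha> u y \<partial>trans_meas M \<alpha> a x)"
    by (simp add: sum_words_upto_Suc[OF finite_alphabet])
  also have "\<dots> \<le> emeasure (\<alpha> x) {None} + (\<Sum>a\<in>A. emeasure (trans_meas M \<alpha> a x) (space M))"
    by (intro add_left_mono sum_mono integral_le)
  also have "\<dots> \<le> 1" by (rule termination_plus_successors_le_1[OF trm x])
  finally show ?case .
qed

end

section \<open>The generators of the trace sigma-algebra\<close>

lemma word_prefix_Nil [simp]: "word_prefix [] w"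
  by (cases w) auto

lemma word_prefix_prefix: "word_prefix u w \<Longrightarrow> prefix v u \<Longrightarrow> word_prefix v w"
proof (cases w)
  case (Inr f)
  assume "word_prefix u w" "prefix v u"
  then obtain z where "u = v @ z" "u = map f [0..<length u]" using Inr by (auto simp: prefix_def)
  then have "v = take (length v) (map f [0..<length u])" and "length v \<le> length u"
    by (metis append_eq_conv_conj, simp)
  then show "word_prefix v w" using Inr by (simp add: take_map)
qed (auto intro: prefix_order.trans)

lemma word_prefix_comparable: "word_prefix u w \<Longrightarrow> word_prefix v w \<Longrightarrow> prefix u v \<or> prefix v u"
proof (cases w)
  case (Inr f)
  assume "word_prefix u w" "word_prefix v w"
  then have u: "u = map f [0..<length u]" and v: "v = map f [0..<length v]" using Inr by auto
  have "prefix (map f [0..<m]) (map f [0..<n])" if "m \<le> n" for m n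
    using take_is_prefix[of m "map f [0..<n]"] that by (simp add: take_map)
  then show ?thesis using u v by (metis nat_le_linear)
qed (use prefix_same_cases in auto)

lemma cyl_Int:
  "cyl d A u \<inter> cyl d A v = (if prefix u v then cyl d A v else if prefix v u then cyl d A u else {})"
  by (auto simp: cyl_def dest: word_prefix_prefix word_prefix_comparable)

lemma gens_cases:
  assumes "B \<in> gens d A"
  obtains "B = {}"
    | u where "terminating d" "u \<in> lists A" "B = {Inl u}"
    | u where "infinite_runs d" "u \<in> lists A" "B = cyl d A u"
  using assms by (auto simp: gens_def split: if_splits)

lemma gens_Pow_words: "gens d A \<subseteq> Pow (words d A)"
  by (auto simp: gens_def words_def cyl_def split: if_splits)

lemma sets_trace_space: "sets (trace_space d A) = sigma_sets (words d A) (gens d A)"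
  unfolding trace_space_def using gens_Pow_words by (rule sets_measure_of)

lemma space_trace_space: "space (trace_space d A) = words d A"
  unfolding trace_space_def using gens_Pow_words by (rule space_measure_of)

text \<open>Any two generators are nested or disjoint: singletons trivially, cylinders because two
  prefixes of a word are comparable.  In particular the generators form a pi-system.\<close>

lemma gens_nested_or_disjoint:
  assumes B: "B \<in> gens d A" and C: "C \<in> gens d A"
  shows "B \<inter> C \<in> {B, C, {}}"
proof (cases rule: gens_cases[OF B])
  case (2 u)
  then show ?thesis by (cases "Inl u \<in> C") auto
next
  case (3 u)
  show ?thesis
  proof (cases rule: gens_cases[OF C])
    case (2 v)
    then show ?thesis by (cases "Inl v \<in> B") auto
  next
    case (3 v)
    then show ?thesis using \<open>B = cyl d A u\<close> by (simp add: cyl_Int)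
  qed simp
qed simp

lemma Int_stable_gens: "Int_stable (gens d A)"
proof (rule Int_stableI)
  fix B C assume "B \<in> gens d A" "C \<in> gens d A"
  moreover have "{} \<in> gens d A" by (simp add: gens_def)
  ultimately show "B \<inter> C \<in> gens d A" using gens_nested_or_disjoint[of B d A C] by auto
qed

section \<open>Measurability of the trace measures\<close>

locale pts_trace = pts +
  fixes tr :: "'x \<Rightarrow> 'a word measure"
  assumes trace_extension: "\<forall>x \<in> space M. is_trace_extension d A M \<alpha> x (tr x)"
begin

lemma sets_tr: "x \<in> space M \<Longrightarrow> sets (tr x) = sets (trace_space d A)"
  using trace_extension by (auto simp: is_trace_extension_def)

lemma space_tr: "x \<in> space M \<Longrightarrow> space (tr x) = words d A"
  using sets_eq_imp_space_eq[OF sets_tr] space_trace_space by simp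

lemma emeasure_tr_singleton:
  "x \<in> space M \<Longrightarrow> terminating d \<Longrightarrow> u \<in> lists A \<Longrightarrow> emeasure (tr x) {Inl u} = tr_single M \<alpha> u x"
  using trace_extension by (auto simp: is_trace_extension_def)

lemma emeasure_tr_cyl:
  "x \<in> space M \<Longrightarrow> infinite_runs d \<Longrightarrow> u \<in> lists A \<Longrightarrow> emeasure (tr x) (cyl d A u) = tr_cyl M \<alpha> u x"
  using trace_extension by (auto simp: is_trace_extension_def)

lemma emeasure_tr_words_infinite:
  "x \<in> space M \<Longrightarrow> infinite_runs d \<Longrightarrow> emeasure (tr x) (words d A) = 1"
  using emeasure_tr_cyl[of x "[]"] by (simp add: cyl_def)

text \<open>For type *, tr x is supported on the countably many finite words, so its total mass is
  the limit of the masses of the words of bounded length.\<close>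

lemma emeasure_tr_words_finite:
  assumes x: "x \<in> space M" and trm: "terminating d" and fin: "\<not> infinite_runs d"
  shows "emeasure (tr x) (words d A) = (SUP n. \<Sum>u\<in>words_upto A n. tr_single M \<alpha> u x)"
proof -
  have words: "words d A = (\<Union>n. Inl ` words_upto A n)"
  proof -
    have "words d A = Inl ` lists A" using trm fin by (simp add: words_def)
    then show ?thesis by (simp only: lists_UN_words_upto image_UN)
  qed
  have singleton: "{Inl u} \<in> sets (tr x)" if "u \<in> lists A" for u
    using that trm sets_tr[OF x] by (auto simp: sets_trace_space gens_def intro!: sigma_sets.Basic)
  have upto_sets: "Inl ` words_upto A n \<in> sets (tr x)" for n
  proof (rule sets.countable)
    show "{w} \<in> sets (tr x)" if "w \<in> Inl ` words_upto A n" for w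
      using that singleton words_upto_lists[of A n] by auto
    show "countable (Inl ` words_upto A n)"
      using finite_words_upto[OF finite_alphabet] by (simp add: countable_finite)
  qed
  have upto: "emeasure (tr x) (Inl ` words_upto A n) = (\<Sum>u\<in>words_upto A n. tr_single M \<alpha> u x)" for n
  proof -
    have "emeasure (tr x) (Inl ` words_upto A n) = (\<Sum>w\<in>Inl ` words_upto A n. emeasure (tr x) {w})"
      using singleton words_upto_lists[of A n] finite_words_upto[OF finite_alphabet, of n]
      by (intro emeasure_eq_sum_singleton) auto
    also have "\<dots> = (\<Sum>u\<in>words_upto A n. emeasure (tr x) {Inl u})"
      by (simp add: sum.reindex)
    also have "\<dots> = (\<Sum>u\<in>words_upto A n. tr_single M \<alpha> u x)"
      using emeasure_tr_singleton[OF x trm] words_upto_lists[of A n] by (intro sum.cong) auto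
    finally show ?thesis .
  qed
  have "emeasure (tr x) (words d A) = (SUP n. emeasure (tr x) (Inl ` words_upto A n))"
    unfolding words using upto_sets
    by (intro SUP_emeasure_incseq[symmetric]) (auto simp: incseq_def words_upto_def)
  then show ?thesis by (simp add: upto)
qed

lemma emeasure_tr_words_le_1:
  assumes x: "x \<in> space M"
  shows "emeasure (tr x) (words d A) \<le> 1"
proof (cases "infinite_runs d")
  case True
  then show ?thesis using emeasure_tr_words_infinite[OF x] by simp
next
  case False
  show ?thesis
  proof (cases "terminating d")
    case True
    then show ?thesis
      using emeasure_tr_words_finite[OF x True False] sum_tr_single_le_1[OF True x] by (simp add: SUP_least)
  qed (use False in \<open>simp add: words_def\<close>)
qed

lemma measurable_emeasure_tr_words: "(\<lambda>x. emeasure (tr x) (words d A)) \<in> borel_measurable M"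
proof (cases "infinite_runs d")
  case True
  show ?thesis using borel_measurable_const[of "1 :: ennreal" M]
    by (rule measurable_cong[THEN iffD1, rotated]) (simp add: emeasure_tr_words_infinite[OF _ True])
next
  case False
  show ?thesis
  proof (cases "terminating d")
    case True
    have "(\<lambda>x. tr_single M \<alpha> u x) \<in> borel_measurable M" if "u \<in> words_upto A n" for u n
      using that words_upto_lists measurable_tr_single[OF True] by blast
    then have "(\<lambda>x. SUP n. \<Sum>u\<in>words_upto A n. tr_single M \<alpha> u x) \<in> borel_measurable M"
      by (intro borel_measurable_SUP borel_measurable_sum) simp_all
    then show ?thesis
      by (rule measurable_cong[THEN iffD1, rotated]) (simp add: emeasure_tr_words_finite[OF _ True False])
  qed (use False in \<open>simp add: words_def\<close>)
qed

lemma measurable_emeasure_tr_gens: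
  assumes "B \<in> gens d A"
  shows "(\<lambda>x. emeasure (tr x) B) \<in> borel_measurable M"
proof (cases rule: gens_cases[OF assms])
  case (2 u)
  show ?thesis using measurable_tr_single[OF 2(1,2)]
    by (rule measurable_cong[THEN iffD1, rotated]) (simp add: 2(3) emeasure_tr_singleton[OF _ 2(1,2)])
next
  case (3 u)
  show ?thesis using measurable_tr_cyl[OF 3(2)]
    by (rule measurable_cong[THEN iffD1, rotated]) (simp add: 3(3) emeasure_tr_cyl[OF _ 3(1,2)])
qed simp

lemma measurable_emeasure_tr:
  "S \<in> sets (trace_space d A) \<Longrightarrow> (\<lambda>x. emeasure (tr x) S) \<in> borel_measurable M"
  by (rule measurable_emeasure_generated[where N = "trace_space d A" and \<Omega> = "words d A" and G = "gens d A"])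
     (simp_all add: sets_trace_space Int_stable_gens gens_Pow_words sets_tr emeasure_tr_words_le_1
        measurable_emeasure_tr_gens measurable_emeasure_tr_words)

end

theorem mainTheorem7:
  fixes d :: pts_type and A :: "'a set" and M :: "'x measure"
    and \<alpha> :: "'x \<Rightarrow> ('a \<times> 'x) option measure"
    and tr :: "'x \<Rightarrow> 'a word measure"
  assumes "finite A"
    and "\<alpha> \<in> M \<rightarrow>\<^sub>M T_alg d (succ_space d A M)"
    and "\<forall>x \<in> space M. is_trace_extension d A M \<alpha> x (tr x)"
  shows "(\<forall>S \<in> sets (trace_space d A). (\<lambda>x. measure (tr x) S) \<in> borel_measurable M)
         \<and> tr \<in> M \<rightarrow>\<^sub>M T_alg d (trace_space d A)"
proof -
  interpret pts_trace d A M \<alpha> tr using assms by unfold_locales auto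
  have "tr \<in> M \<rightarrow>\<^sub>M T_alg d (trace_space d A)"
  proof (cases "infinite_runs d")
    case True
    then have "prob_space (tr x)" if "x \<in> space M" for x
      using that emeasure_tr_words_infinite space_tr by (intro prob_spaceI) auto
    then have "tr \<in> M \<rightarrow>\<^sub>M prob_algebra (trace_space d A)"
      by (rule measurable_prob_algebra_generated[OF sets_trace_space Int_stable_gens gens_Pow_words])
         (simp_all add: sets_tr measurable_emeasure_tr_gens)
    then show ?thesis using True by (simp add: T_alg_def)
  next
    case False
    have "tr \<in> M \<rightarrow>\<^sub>M sub_prob_algebra (trace_space d A)"
      by (rule measurable_sub_prob_algebra)
         (simp_all add: space_tr sets_tr emeasure_tr_words_le_1 measurable_emeasure_tr)
    then show ?thesis using False by (simp add: T_alg_def)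
  qed
  moreover have "(\<lambda>x. measure (tr x) S) \<in> borel_measurable M" if "S \<in> sets (trace_space d A)" for S
    unfolding measure_def by (rule borel_measurable_enn2real[OF measurable_emeasure_tr[OF that]])
  ultimately show ?thesis by blast
qed

end
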